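(* (a) For every $M\ge1$ and every $N\times M$ binary matrix $C_{N,M}=(c_{i,a})$, $$\sum_{X\in\{0,1\}^N}\mu_p(X)\,|\mathcal U_0|\ \ge\ B_{M,C_{N,M},p}:=q\sum_{i=1}^N\prod_{a=1}^M\bigl(1-q^{d_a-1}\bigr)^{c_{i,a}},$$ where $q:=1-p$ and $d_a:=\sum_{l=1}^N c_{l,a}$ is the degree of test $a$. (b) If the bipartite graph $\mathcal G(C_{N,M})$ has girth at least $6$, then the inequality in (a) holds with equality.
   Context: Let $N,M\ge1$ be integers and $p\in(0,1)$. A configuration $X=(x_1,\dots,x_N)\in\{0,1\}^N$ is drawn from $\mu_p(X)=\prod_{i} p^{x_i}(1-p)^{1-x_i}$. $C_{N,M}=(c_{i,a})$ is an $N\times M$ binary matrix; variable $i$ belongs to test $a$ iff $c_{i,a}=1$. Test outcome $T_a=0$ if $c_{i,a}x_i=0$ for all $i$, else $T_a=1$. Variable $i$ is a sure zero if some $a$ has $c_{i,a}=1$ and $T_a=0$; $\mathcal U_0$ is the set of $i$ with $x_i=0$ that are not sure zeros. Convention $0^0=1$. $\mathcal G(C_{N,M})$ is the bipartite graph with variable nodes $1,\dots,N$, test nodes $1,\dots,M$ and an edge between $i$ and $a$ iff $c_{i,a}=1$; girth at least $6$ means it has no cycle of length $4$, i.e. no two distinct variables belong to two common distinct tests. *)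

theory Defs
  imports "HOL-Library.FuncSet" Complex_Main
begin

text \<open>Variables are indexed by 0..N-1, tests by 0..M-1.
  The binary matrix is c :: nat => nat => bool (c i a = True iff c_{i,a} = 1).\<close>

definition configs :: "nat \<Rightarrow> (nat \<Rightarrow> bool) set" where
  "configs N = {0..<N} \<rightarrow>\<^sub>E (UNIV :: bool set)"

definition mu :: "real \<Rightarrow> nat \<Rightarrow> (nat \<Rightarrow> bool) \<Rightarrow> real" where
  "mu p N X = (\<Prod>i<N. p ^ (of_bool (X i) :: nat) * (1 - p) ^ (1 - of_bool (X i) :: nat))"

definition test_outcome :: "nat \<Rightarrow> (nat \<Rightarrow> nat \<Rightarrow> bool) \<Rightarrow> (nat \<Rightarrow> bool) \<Rightarrow> nat \<Rightarrow> bool" where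
  "test_outcome N c X a = (\<exists>i<N. c i a \<and> X i)"

definition sure_zero :: "nat \<Rightarrow> nat \<Rightarrow> (nat \<Rightarrow> nat \<Rightarrow> bool) \<Rightarrow> (nat \<Rightarrow> bool) \<Rightarrow> nat \<Rightarrow> bool" where
  "sure_zero N M c X i = (\<exists>a<M. c i a \<and> \<not> test_outcome N c X a)"

definition U0 :: "nat \<Rightarrow> nat \<Rightarrow> (nat \<Rightarrow> nat \<Rightarrow> bool) \<Rightarrow> (nat \<Rightarrow> bool) \<Rightarrow> nat set" where
  "U0 N M c X = {i. i < N \<and> \<not> X i \<and> \<not> sure_zero N M c X i}"

definition test_degree :: "nat \<Rightarrow> (nat \<Rightarrow> nat \<Rightarrow> bool) \<Rightarrow> nat \<Rightarrow> nat" where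
  "test_degree N c a = (\<Sum>l<N. of_bool (c l a))"

definition bound_B :: "nat \<Rightarrow> nat \<Rightarrow> (nat \<Rightarrow> nat \<Rightarrow> bool) \<Rightarrow> real \<Rightarrow> real" where
  "bound_B N M c p = (let q = 1 - p in
     q * (\<Sum>i<N. \<Prod>a<M. (1 - q ^ (test_degree N c a - 1)) ^ (of_bool (c i a) :: nat)))"

text \<open>Girth at least 6: no two distinct variables share two distinct tests.\<close>
definition girth_ge_6 :: "nat \<Rightarrow> nat \<Rightarrow> (nat \<Rightarrow> nat \<Rightarrow> bool) \<Rightarrow> bool" where
  "girth_ge_6 N M c = (\<forall>i<N. \<forall>j<N. \<forall>a<M. \<forall>b<M.
     i \<noteq> j \<and> a \<noteq> b \<longrightarrow> \<not> (c i a \<and> c j a \<and> c i b \<and> c j b))"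

end

theory Submission
  imports Defs
begin

text \<open>
  By linearity, the expected size of \<open>\<U>\<^sub>0\<close> is the sum over \<open>i\<close> of the probability that
  \<open>i \<in> \<U>\<^sub>0\<close>, i.e. that \<open>x\<^sub>i = 0\<close> and every test \<open>a \<ni> i\<close> contains another positive variable.
  The first event is independent of the others, giving a factor \<open>q\<close>. The events
  "test \<open>a\<close> contains a positive variable other than \<open>i\<close>" are increasing, so by Harris'
  inequality the probability of their intersection is at least the product
  \<open>\<Prod>\<^sub>a (1 - q\<^bsup>d\<^sub>a - 1\<^esup>)\<close>. If the girth is at least 6, distinct tests through \<open>i\<close> share no
  other variable, so these events are independent and the bound is attained.
\<close>

text \<open>
  Expectation under the product of Bernoulli(\<open>p\<close>) laws on the coordinates \<open>0, \<dots>, n - 1\<close>,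
  computed by conditioning on the last coordinate; coordinates \<open>\<ge> n\<close> stay \<open>undefined\<close>, so
  the result is only meaningful for functions that ignore them.
\<close>

fun bern_expect :: "real \<Rightarrow> nat \<Rightarrow> ((nat \<Rightarrow> bool) \<Rightarrow> real) \<Rightarrow> real" where
  "bern_expect p 0 f = f (\<lambda>_. undefined)"
| "bern_expect p (Suc n) f =
     p * bern_expect p n (\<lambda>X. f (X(n := True))) + (1 - p) * bern_expect p n (\<lambda>X. f (X(n := False)))"

lemma bern_expect_add:
  "bern_expect p n (\<lambda>X. f X + g X) = bern_expect p n f + bern_expect p n g"
  by (induction n arbitrary: f g) (simp_all add: algebra_simps)

lemma bern_expect_cmult: "bern_expect p n (\<lambda>X. k * f X) = k * bern_expect p n f"
  by (induction n arbitrary: f) (simp_all add: algebra_simps)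

lemma bern_expect_const: "bern_expect p n (\<lambda>_. k) = k"
  by (induction n) (simp_all add: algebra_simps)

lemma bern_expect_diff: "bern_expect p n (\<lambda>X. k - f X) = k - bern_expect p n f"
  using bern_expect_add[of p n "\<lambda>_. k" "\<lambda>X. (-1) * f X"]
  unfolding bern_expect_const bern_expect_cmult by simp

lemma bern_expect_sum:
  "finite I \<Longrightarrow> bern_expect p n (\<lambda>X. \<Sum>i\<in>I. F i X) = (\<Sum>i\<in>I. bern_expect p n (F i))"
  by (induction I rule: finite_induct) (simp_all add: bern_expect_const bern_expect_add)

lemma bern_expect_mono:
  assumes "0 \<le> p" "p \<le> 1" "\<And>X. f X \<le> g X"
  shows "bern_expect p n f \<le> bern_expect p n g"
  using assms(3)
proof (induction n arbitrary: f g)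
  case (Suc n)
  have "bern_expect p n (\<lambda>X. f (X(n := b))) \<le> bern_expect p n (\<lambda>X. g (X(n := b)))" for b
    using Suc.prems by (rule Suc.IH)
  then show ?case
    unfolding bern_expect.simps using assms(1,2)
    by (intro add_mono mult_left_mono) simp_all
qed simp

lemma mu_fun_upd:
  assumes "X \<in> configs n"
  shows "mu p (Suc n) (X(n := b)) = (if b then p else 1 - p) * mu p n X"
proof -
  have "(\<Prod>i<n. p ^ (of_bool ((X(n := b)) i) :: nat) * (1 - p) ^ (1 - of_bool ((X(n := b)) i) :: nat))
      = mu p n X"
    unfolding mu_def by (rule prod.cong) auto
  then show ?thesis
    unfolding mu_def by (cases b) (simp_all add: prod.lessThan_Suc mult.commute)
qed

lemma bern_expect_eq_sum_configs:
  "bern_expect p n f = (\<Sum>X\<in>configs n. mu p n X * f X)"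
proof (induction n arbitrary: f)
  case 0
  then show ?case by (simp add: configs_def mu_def)
next
  case (Suc n)
  let ?ext = "\<lambda>(y, g). g(n := y)"
  have configs_Suc: "configs (Suc n) = ?ext ` (UNIV \<times> configs n)"
    unfolding configs_def by (metis PiE_insert_eq atLeast0_lessThan_Suc)
  have inj: "inj_on ?ext (UNIV \<times> configs n)"
    unfolding configs_def using inj_combinator[of n "{0..<n}" "\<lambda>_. UNIV :: bool set"] by simp
  have "(\<Sum>X\<in>configs (Suc n). mu p (Suc n) X * f X)
      = (\<Sum>y\<in>UNIV. \<Sum>g\<in>configs n. mu p (Suc n) (g(n := y)) * f (g(n := y)))"
    unfolding configs_Suc sum.reindex[OF inj] sum.cartesian_product
    by (simp add: case_prod_unfold)
  also have "\<dots> = p * (\<Sum>g\<in>configs n. mu p n g * f (g(n := True)))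
      + (1 - p) * (\<Sum>g\<in>configs n. mu p n g * f (g(n := False)))"
    by (simp add: UNIV_bool sum_distrib_left mu_fun_upd mult.assoc cong: sum.cong)
  finally show ?case
    unfolding bern_expect.simps Suc.IH by (rule sym)
qed

lemma bern_expect_all_false:
  "S \<subseteq> {..<n} \<Longrightarrow> bern_expect p n (\<lambda>X. of_bool (\<forall>l\<in>S. \<not> X l)) = (1 - p) ^ card S"
proof (induction n arbitrary: S)
  case (Suc n)
  show ?case
  proof (cases "n \<in> S")
    case True
    have "finite S"
      using Suc.prems finite_subset by blast
    then have "card S = Suc (card (S - {n}))"
      using True by (rule card_Suc_Diff1[symmetric])
    moreover have "S - {n} \<subseteq> {..<n}"
      using Suc.prems by auto
    moreover have "(\<lambda>X. of_bool (\<forall>l\<in>S. \<not> (X(n := True)) l) :: real) = (\<lambda>_. 0)"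
      using True by (auto intro!: ext)
    moreover have "(\<lambda>X. of_bool (\<forall>l\<in>S. \<not> (X(n := False)) l) :: real)
        = (\<lambda>X. of_bool (\<forall>l\<in>S - {n}. \<not> X l))"
      using True by (auto intro!: ext)
    ultimately show ?thesis
      unfolding bern_expect.simps by (simp add: Suc.IH bern_expect_const)
  next
    case False
    then have "S \<subseteq> {..<n}"
      using Suc.prems by (auto simp: less_Suc_eq)
    moreover have "(\<lambda>X. of_bool (\<forall>l\<in>S. \<not> (X(n := b)) l) :: real) = (\<lambda>X. of_bool (\<forall>l\<in>S. \<not> X l))" for b
      using False by (auto intro!: ext)
    ultimately show ?thesis
      unfolding bern_expect.simps by (simp add: Suc.IH algebra_simps)
  qed
qed simp

definition increasing :: "((nat \<Rightarrow> bool) \<Rightarrow> real) \<Rightarrow> bool" where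
  "increasing f \<longleftrightarrow> (\<forall>X Y. (\<forall>i. X i \<longrightarrow> Y i) \<longrightarrow> f X \<le> f Y)"

lemma increasing_fun_upd: "increasing f \<Longrightarrow> increasing (\<lambda>X. f (X(n := b)))"
  unfolding increasing_def by simp

lemma increasing_False_le_True: "increasing f \<Longrightarrow> f (X(n := False)) \<le> f (X(n := True))"
  unfolding increasing_def by simp

lemma increasing_prod:
  assumes "\<And>a. a \<in> A \<Longrightarrow> increasing (F a)" "\<And>a X. a \<in> A \<Longrightarrow> 0 \<le> F a X"
  shows "increasing (\<lambda>X. \<Prod>a\<in>A. F a X)"
  using assms unfolding increasing_def by (blast intro: prod_mono)

lemma harris_inequality:
  assumes "0 \<le> p" "p \<le> 1" "increasing f" "increasing g"
  shows "bern_expect p n f * bern_expect p n g \<le> bern_expect p n (\<lambda>X. f X * g X)"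
  using assms(3,4)
proof (induction n arbitrary: f g)
  case (Suc n)
  define f1 f0 g1 g0 where "f1 = (\<lambda>X. f (X(n := True)))" and "f0 = (\<lambda>X. f (X(n := False)))"
    and "g1 = (\<lambda>X. g (X(n := True)))" and "g0 = (\<lambda>X. g (X(n := False)))"
  define a1 a0 b1 b0 where "a1 = bern_expect p n f1" and "a0 = bern_expect p n f0"
    and "b1 = bern_expect p n g1" and "b0 = bern_expect p n g0"
  have IH: "a1 * b1 \<le> bern_expect p n (\<lambda>X. f1 X * g1 X)" "a0 * b0 \<le> bern_expect p n (\<lambda>X. f0 X * g0 X)"
    unfolding a1_def a0_def b1_def b0_def f1_def f0_def g1_def g0_def
    using Suc by (simp_all add: increasing_fun_upd)
  have "a0 \<le> a1" "b0 \<le> b1"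
    unfolding a1_def a0_def b1_def b0_def f1_def f0_def g1_def g0_def
    using Suc.prems assms(1,2) by (auto intro!: bern_expect_mono increasing_False_le_True)
  \<comment> \<open>the one-variable case: Chebyshev's sum inequality for two similarly ordered pairs\<close>
  then have "0 \<le> p * (1 - p) * ((a1 - a0) * (b1 - b0))"
    using assms(1,2) by simp
  moreover have "p * (a1 * b1) + (1 - p) * (a0 * b0) - (p * a1 + (1 - p) * a0) * (p * b1 + (1 - p) * b0)
      = p * (1 - p) * ((a1 - a0) * (b1 - b0))"
    by (simp add: algebra_simps)
  moreover have "p * (a1 * b1) + (1 - p) * (a0 * b0)
      \<le> p * bern_expect p n (\<lambda>X. f1 X * g1 X) + (1 - p) * bern_expect p n (\<lambda>X. f0 X * g0 X)"
    using IH assms(1,2) by (intro add_mono mult_left_mono) auto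
  moreover have "bern_expect p (Suc n) f * bern_expect p (Suc n) g
      = (p * a1 + (1 - p) * a0) * (p * b1 + (1 - p) * b0)"
    unfolding a1_def a0_def b1_def b0_def f1_def f0_def g1_def g0_def by simp
  moreover have "bern_expect p (Suc n) (\<lambda>X. f X * g X)
      = p * bern_expect p n (\<lambda>X. f1 X * g1 X) + (1 - p) * bern_expect p n (\<lambda>X. f0 X * g0 X)"
    unfolding f1_def f0_def g1_def g0_def by simp
  ultimately show ?case
    by linarith
qed simp

lemma harris_inequality_prod:
  assumes "0 \<le> p" "p \<le> 1" "finite A"
    and "\<And>a. a \<in> A \<Longrightarrow> increasing (F a)" "\<And>a X. a \<in> A \<Longrightarrow> 0 \<le> F a X"
  shows "(\<Prod>a\<in>A. bern_expect p n (F a)) \<le> bern_expect p n (\<lambda>X. \<Prod>a\<in>A. F a X)"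
  using assms(3-)
proof (induction A rule: finite_induct)
  case empty
  then show ?case by (simp add: bern_expect_const)
next
  case (insert b A)
  have "0 \<le> bern_expect p n (F b)"
    using bern_expect_mono[OF assms(1,2), of "\<lambda>_. 0" "F b" n] insert.prems
    by (simp add: bern_expect_const)
  then have "(\<Prod>a\<in>insert b A. bern_expect p n (F a))
      \<le> bern_expect p n (F b) * bern_expect p n (\<lambda>X. \<Prod>a\<in>A. F a X)"
    using insert by (simp add: mult_left_mono)
  also have "\<dots> \<le> bern_expect p n (\<lambda>X. F b X * (\<Prod>a\<in>A. F a X))"
    using insert.prems by (intro harris_inequality assms(1,2) increasing_prod) auto
  finally show ?case
    using insert by simp
qed

definition depends_only_on :: "((nat \<Rightarrow> bool) \<Rightarrow> real) \<Rightarrow> nat set \<Rightarrow> bool" where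
  "depends_only_on f S \<longleftrightarrow> (\<forall>X Y. (\<forall>i\<in>S. X i = Y i) \<longrightarrow> f X = f Y)"

lemma depends_only_on_prod:
  assumes "\<And>a. a \<in> A \<Longrightarrow> depends_only_on (F a) (S a)"
  shows "depends_only_on (\<lambda>X. \<Prod>a\<in>A. F a X) (\<Union>a\<in>A. S a)"
  using assms unfolding depends_only_on_def by (metis (no_types, lifting) UN_I prod.cong)

lemma bern_expect_mult_independent:
  assumes "depends_only_on f S" "depends_only_on g T" "S \<inter> T = {}"
  shows "bern_expect p n (\<lambda>X. f X * g X) = bern_expect p n f * bern_expect p n g"
  using assms
proof (induction n arbitrary: f g S T)
  case (Suc n)
  have IH: "bern_expect p n (\<lambda>X. f (X(n := b)) * g (X(n := b)))
      = bern_expect p n (\<lambda>X. f (X(n := b))) * bern_expect p n (\<lambda>X. g (X(n := b)))" for b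
    using Suc.prems by (intro Suc.IH[of _ S _ T]) (auto simp: depends_only_on_def)
  have irrelevant: "(\<lambda>X. h (X(n := True))) = (\<lambda>X. h (X(n := False)))"
    if "depends_only_on h U" "n \<notin> U" for h U
    using that unfolding depends_only_on_def by (intro ext) (metis fun_upd_other)
  \<comment> \<open>variable \<open>n\<close> is irrelevant to \<open>f\<close> or to \<open>g\<close>, so the recursion step factorises\<close>
  from Suc.prems consider "n \<notin> S" | "n \<notin> T"
    by blast
  then show ?case
  proof cases
    case 1
    show ?thesis
      unfolding bern_expect.simps IH irrelevant[OF Suc.prems(1) 1] by (simp add: algebra_simps)
  next
    case 2
    show ?thesis
      unfolding bern_expect.simps IH irrelevant[OF Suc.prems(2) 2] by (simp add: algebra_simps)
  qed
qed simp

lemma bern_expect_prod_independent: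
  assumes "finite A" "\<And>a. a \<in> A \<Longrightarrow> depends_only_on (F a) (S a)"
    and "\<And>a b. a \<in> A \<Longrightarrow> b \<in> A \<Longrightarrow> a \<noteq> b \<Longrightarrow> S a \<inter> S b = {}"
  shows "bern_expect p n (\<lambda>X. \<Prod>a\<in>A. F a X) = (\<Prod>a\<in>A. bern_expect p n (F a))"
  using assms
proof (induction A rule: finite_induct)
  case empty
  then show ?case by (simp add: bern_expect_const)
next
  case (insert b A)
  have "bern_expect p n (\<lambda>X. F b X * (\<Prod>a\<in>A. F a X))
      = bern_expect p n (F b) * bern_expect p n (\<lambda>X. \<Prod>a\<in>A. F a X)"
    using insert by (intro bern_expect_mult_independent[of _ "S b" _ "\<Union>a\<in>A. S a"] depends_only_on_prod) auto
  then show ?case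
    using insert by simp
qed

definition some_true :: "nat set \<Rightarrow> (nat \<Rightarrow> bool) \<Rightarrow> real" where
  "some_true S X = of_bool (\<exists>l\<in>S. X l)"

lemma increasing_some_true: "increasing (some_true S)"
  unfolding increasing_def some_true_def by auto

lemma depends_only_on_some_true: "depends_only_on (some_true S) S"
  unfolding depends_only_on_def some_true_def by auto

lemma bern_expect_some_true:
  assumes "S \<subseteq> {..<n}"
  shows "bern_expect p n (some_true S) = 1 - (1 - p) ^ card S"
proof -
  have "some_true S = (\<lambda>X. 1 - of_bool (\<forall>l\<in>S. \<not> X l))"
    unfolding some_true_def by auto
  then show ?thesis
    using bern_expect_all_false[OF assms] by (simp add: bern_expect_diff)
qed

lemma prod_of_bool:
  "finite A \<Longrightarrow> (\<Prod>a\<in>A. (of_bool (P a) :: real)) = of_bool (\<forall>a\<in>A. P a)"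
  by (induction A rule: finite_induct) auto

definition tests_of :: "nat \<Rightarrow> (nat \<Rightarrow> nat \<Rightarrow> bool) \<Rightarrow> nat \<Rightarrow> nat set" where
  "tests_of M c i = {a \<in> {..<M}. c i a}"

definition other_members :: "nat \<Rightarrow> (nat \<Rightarrow> nat \<Rightarrow> bool) \<Rightarrow> nat \<Rightarrow> nat \<Rightarrow> nat set" where
  "other_members N c i a = {l. l < N \<and> c l a \<and> l \<noteq> i}"

lemma card_other_members:
  assumes "i < N" "c i a"
  shows "card (other_members N c i a) = test_degree N c a - 1"
proof -
  have "other_members N c i a = ({..<N} \<inter> {l. c l a}) - {i}"
    unfolding other_members_def by auto
  then show ?thesis
    using assms by (simp add: test_degree_def card_Diff_singleton)
qed

lemma girth_ge_6_other_members_disjoint: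
  assumes "girth_ge_6 N M c" "i < N" "a \<in> tests_of M c i" "b \<in> tests_of M c i" "a \<noteq> b"
  shows "other_members N c i a \<inter> other_members N c i b = {}"
  using assms unfolding girth_ge_6_def tests_of_def other_members_def by blast

lemma indicator_U0:
  assumes "i < N"
  shows "of_bool (i \<in> U0 N M c X)
    = of_bool (\<not> X i) * (\<Prod>a\<in>tests_of M c i. some_true (other_members N c i a) X)"
proof -
  have "i \<in> U0 N M c X \<longleftrightarrow> \<not> X i \<and> (\<forall>a\<in>tests_of M c i. \<exists>l\<in>other_members N c i a. X l)"
    using assms unfolding U0_def sure_zero_def test_outcome_def tests_of_def other_members_def
    by auto
  then show ?thesis
    unfolding some_true_def by (simp add: prod_of_bool tests_of_def)
qed

lemma bern_expect_indicator_U0: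
  assumes "i < N"
  shows "bern_expect p N (\<lambda>X. of_bool (i \<in> U0 N M c X))
    = (1 - p) * bern_expect p N (\<lambda>X. \<Prod>a\<in>tests_of M c i. some_true (other_members N c i a) X)"
proof -
  have "bern_expect p N (\<lambda>X. of_bool (\<not> X i)) = 1 - p"
    using bern_expect_all_false[of "{i}" N p] assms by simp
  moreover have "depends_only_on (\<lambda>X. of_bool (\<not> X i)) {i}"
    unfolding depends_only_on_def by auto
  moreover have "depends_only_on (\<lambda>X. \<Prod>a\<in>tests_of M c i. some_true (other_members N c i a) X)
      (\<Union>a\<in>tests_of M c i. other_members N c i a)"
    by (intro depends_only_on_prod depends_only_on_some_true)
  ultimately show ?thesis
    unfolding indicator_U0[OF assms]
    by (subst bern_expect_mult_independent) (auto simp: other_members_def)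
qed

lemma prod_bern_expect_some_true_other_members:
  assumes "i < N"
  shows "(\<Prod>a\<in>tests_of M c i. bern_expect p N (some_true (other_members N c i a)))
    = (\<Prod>a<M. (1 - (1 - p) ^ (test_degree N c a - 1)) ^ (of_bool (c i a) :: nat))"
proof -
  have "(\<Prod>a\<in>tests_of M c i. bern_expect p N (some_true (other_members N c i a)))
      = (\<Prod>a\<in>tests_of M c i. 1 - (1 - p) ^ (test_degree N c a - 1))"
  proof (rule prod.cong)
    fix a
    assume "a \<in> tests_of M c i"
    then have "c i a"
      by (simp add: tests_of_def)
    have "other_members N c i a \<subseteq> {..<N}"
      by (auto simp: other_members_def)
    then show "bern_expect p N (some_true (other_members N c i a)) = 1 - (1 - p) ^ (test_degree N c a - 1)"
      using card_other_members[where c = c, OF assms \<open>c i a\<close>] by (simp add: bern_expect_some_true)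
  qed simp
  also have "\<dots> = (\<Prod>a<M. if c i a then 1 - (1 - p) ^ (test_degree N c a - 1) else 1)"
    unfolding tests_of_def by (rule prod.inter_filter) simp
  also have "\<dots> = (\<Prod>a<M. (1 - (1 - p) ^ (test_degree N c a - 1)) ^ (of_bool (c i a) :: nat))"
    by (rule prod.cong) simp_all
  finally show ?thesis .
qed

lemma expected_card_U0:
  "(\<Sum>X\<in>configs N. mu p N X * real (card (U0 N M c X)))
    = (1 - p) * (\<Sum>i<N. bern_expect p N (\<lambda>X. \<Prod>a\<in>tests_of M c i. some_true (other_members N c i a) X))"
proof -
  have "real (card (U0 N M c X)) = (\<Sum>i<N. of_bool (i \<in> U0 N M c X))" for X
  proof -
    have "{..<N} \<inter> {i. i \<in> U0 N M c X} = U0 N M c X"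
      by (auto simp: U0_def)
    then show ?thesis
      by simp
  qed
  then have "(\<Sum>X\<in>configs N. mu p N X * real (card (U0 N M c X)))
      = bern_expect p N (\<lambda>X. \<Sum>i<N. of_bool (i \<in> U0 N M c X))"
    by (simp only: bern_expect_eq_sum_configs)
  also have "\<dots> = (\<Sum>i<N. bern_expect p N (\<lambda>X. of_bool (i \<in> U0 N M c X)))"
    by (rule bern_expect_sum) simp
  finally show ?thesis
    by (simp add: bern_expect_indicator_U0 sum_distrib_left)
qed

theorem lemma1:
  fixes N M :: nat and p :: real and c :: "nat \<Rightarrow> nat \<Rightarrow> bool"
  assumes "N \<ge> 1" and "M \<ge> 1" and "0 < p" and "p < 1"
  shows "(\<Sum>X\<in>configs N. mu p N X * real (card (U0 N M c X))) \<ge> bound_B N M c p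
         \<and> (girth_ge_6 N M c \<longrightarrow>
         (\<Sum>X\<in>configs N. mu p N X * real (card (U0 N M c X))) = bound_B N M c p)"
proof -
  let ?F = "\<lambda>i a. some_true (other_members N c i a)"
  define V where "V i = bern_expect p N (\<lambda>X. \<Prod>a\<in>tests_of M c i. ?F i a X)" for i
  define W where "W i = (\<Prod>a\<in>tests_of M c i. bern_expect p N (?F i a))" for i
  have lhs: "(\<Sum>X\<in>configs N. mu p N X * real (card (U0 N M c X))) = (1 - p) * (\<Sum>i<N. V i)"
    by (simp add: expected_card_U0 V_def)
  have rhs: "bound_B N M c p = (1 - p) * (\<Sum>i<N. W i)"
    by (simp add: bound_B_def Let_def W_def prod_bern_expect_some_true_other_members)
  have "W i \<le> V i" for i
    unfolding V_def W_def using assms(3,4)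
    by (intro harris_inequality_prod increasing_some_true) (auto simp: tests_of_def some_true_def)
  moreover have "W i = V i" if "girth_ge_6 N M c" "i < N" for i
    unfolding V_def W_def
    using girth_ge_6_other_members_disjoint[OF that]
    by (intro bern_expect_prod_independent[where S = "other_members N c i", symmetric]
        depends_only_on_some_true) (simp_all add: tests_of_def)
  ultimately show ?thesis
    unfolding lhs rhs using assms(3,4) by (auto intro: mult_left_mono sum_mono sum.cong)
qed

end
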